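(* Let $F$ be a uniformly recurrent set. Then every $F$-thin bifix code $X\subset F$ is finite, and every finite bifix code $X\subset F$ is contained in a finite $F$-maximal bifix code $Y\subset F$.
   Context: $A$ is a finite alphabet. $F\subset A^*$ is uniformly recurrent if it is nonempty, closed under factors, every $w\in F$ has some letter $a$ with $wa\in F$, and for every $u\in F$ there is $n\ge1$ such that $u$ is a factor of every word of $F\cap A^n$. A bifix code is a set of nonempty words none of which is a proper prefix or proper suffix of another. $X\subset F$ is $F$-thin if some word of $F$ is not a factor of any word of $X$; it is $F$-maximal bifix if not properly contained in any bifix code contained in $F$. *)

theory Defs
  imports Main "HOL-Library.Sublist"
begin

text \<open>Words over an alphabet A are lists with letters in A; factors are contiguous sublists.\<close>

definition factorial_set :: "'a list set \<Rightarrow> bool" where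
  "factorial_set F \<longleftrightarrow> (\<forall>w\<in>F. \<forall>u. sublist u w \<longrightarrow> u \<in> F)"

definition uniformly_recurrent :: "'a set \<Rightarrow> 'a list set \<Rightarrow> bool" where
  "uniformly_recurrent A F \<longleftrightarrow>
     F \<subseteq> lists A \<and> F \<noteq> {} \<and> factorial_set F \<and>
     (\<forall>w\<in>F. \<exists>a\<in>A. w @ [a] \<in> F) \<and>
     (\<forall>u\<in>F. \<exists>n\<ge>1. \<forall>w\<in>F. length w = n \<longrightarrow> sublist u w)"

definition bifix_code :: "'a list set \<Rightarrow> bool" where
  "bifix_code X \<longleftrightarrow> [] \<notin> X \<and>
     (\<forall>x\<in>X. \<forall>y\<in>X. \<not> strict_prefix x y \<and> \<not> strict_suffix x y)"

definition F_thin :: "'a list set \<Rightarrow> 'a list set \<Rightarrow> bool" where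
  "F_thin F X \<longleftrightarrow> X \<subseteq> F \<and> (\<exists>w\<in>F. \<forall>x\<in>X. \<not> sublist w x)"

definition F_maximal_bifix :: "'a list set \<Rightarrow> 'a list set \<Rightarrow> bool" where
  "F_maximal_bifix F X \<longleftrightarrow> bifix_code X \<and> X \<subseteq> F \<and>
     (\<forall>Y. bifix_code Y \<and> Y \<subseteq> F \<and> X \<subseteq> Y \<longrightarrow> Y = X)"

end

theory Submission imports Defs begin

(* The first claim is elementary: if w \<in> F is not a factor of any word of X, uniform
   recurrence gives n such that w is a factor of every word of F of length n, so all
   words of X are shorter than n and X is finite (the alphabet is finite).

   For the second claim a finite bifix code X \<subseteq> F is completed greedily, length by
   length, to an F-maximal bifix code Y \<subseteq> F (the union of the sets completion_upto).
   Every word of F longer than all words of X has a prefix or a suffix in Y.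
   The finiteness of Y rests on counting the free cuts of a word w: the positions of
   w at which no occurrence of a code word ends.
   (1) Since long words of F are blocked by Y, every w \<in> F has at most m + 1 free cuts,
       where m bounds the lengths of the words of X (lemma free_cuts_card_bound).
   (2) If a code word y contains w strictly inside, y has strictly more free cuts than
       w (lemma free_cuts_grow).
   Choosing w \<in> F with the maximal number of free cuts, uniform recurrence puts w
   strictly inside every long word of F, so by (2) the words of Y are bounded in length.
   Both counting arguments rest on the unitarity of the submonoid Y* generated by a
   bifix code and on greedy factorisations of words over Y. *)

section \<open>The submonoid generated by a set of words\<close>

inductive_set code_star :: "'a list set \<Rightarrow> 'a list set" for Y where
  star_nil: "[] \<in> code_star Y"
| star_cons: "y \<in> Y \<Longrightarrow> u \<in> code_star Y \<Longrightarrow> y @ u \<in> code_star Y"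

lemma star_append: "a \<in> code_star Y \<Longrightarrow> b \<in> code_star Y \<Longrightarrow> a @ b \<in> code_star Y"
  by (induction a rule: code_star.induct) (auto intro: code_star.intros)

lemma star_single: "y \<in> Y \<Longrightarrow> y \<in> code_star Y"
  using star_cons[OF _ star_nil] by fastforce

lemma star_first_factor:
  "u \<in> code_star Y \<Longrightarrow> u \<noteq> [] \<Longrightarrow> \<exists>y r. u = y @ r \<and> y \<in> Y \<and> r \<in> code_star Y"
  by (cases rule: code_star.cases) auto

lemma star_last_factor:
  "u \<in> code_star Y \<Longrightarrow> u \<noteq> [] \<Longrightarrow> \<exists>r y. u = r @ y \<and> y \<in> Y \<and> r \<in> code_star Y"
proof (induction u rule: code_star.induct)
  case star_nil
  then show ?case by simp
next
  case (star_cons y u)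
  show ?case
  proof (cases "u = []")
    case True
    then show ?thesis using star_cons code_star.star_nil by fastforce
  next
    case False
    then obtain r y' where "u = r @ y'" "y' \<in> Y" "r \<in> code_star Y"
      using star_cons by blast
    then show ?thesis
      using star_cons code_star.star_cons[of y Y r] by (intro exI[of _ "y @ r"] exI[of _ y']) auto
  qed
qed

lemma star_nonempty_suffix: "u \<in> code_star Y \<Longrightarrow> u \<noteq> [] \<Longrightarrow> \<exists>y\<in>Y. suffix y u"
  using star_last_factor by (fastforce simp: suffix_def)

section \<open>Unitarity of the submonoid generated by a bifix code\<close>

lemma bifix_code_nonempty: "bifix_code Y \<Longrightarrow> y \<in> Y \<Longrightarrow> y \<noteq> []"
  unfolding bifix_code_def by blast

lemma bifix_prefix_eq: "bifix_code Y \<Longrightarrow> y1 \<in> Y \<Longrightarrow> y2 \<in> Y \<Longrightarrow> prefix y1 y2 \<Longrightarrow> y1 = y2"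
  unfolding bifix_code_def strict_prefix_def by blast

lemma bifix_suffix_eq: "bifix_code Y \<Longrightarrow> y1 \<in> Y \<Longrightarrow> y2 \<in> Y \<Longrightarrow> suffix y1 y2 \<Longrightarrow> y1 = y2"
  unfolding bifix_code_def strict_suffix_def by blast

text \<open>Since \<open>Y\<close> is a prefix code, \<open>Y*\<close> is right unitary: \<open>a, ab \<in> Y*\<close> imply \<open>b \<in> Y*\<close>.\<close>

lemma star_left_cancel:
  assumes "a \<in> code_star Y" and "bifix_code Y" and "a @ b \<in> code_star Y"
  shows "b \<in> code_star Y"
  using assms
proof (induction a arbitrary: b rule: code_star.induct)
  case star_nil
  then show ?case by simp
next
  case (star_cons y u)
  have "(y @ u) @ b \<noteq> []" using bifix_code_nonempty[OF star_cons.prems(1) star_cons.hyps(1)] by simp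
  then obtain y' r where dec: "(y @ u) @ b = y' @ r" "y' \<in> Y" "r \<in> code_star Y"
    using star_first_factor[OF star_cons.prems(2)] by blast
  have "prefix y (y' @ r)" "prefix y' (y' @ r)"
    using dec(1) by (metis append.assoc prefix_def) simp
  then have "prefix y y' \<or> prefix y' y" by (rule prefix_same_cases)
  then have "y = y'" using bifix_prefix_eq[OF star_cons.prems(1)] star_cons.hyps(1) dec(2) by metis
  then have "u @ b \<in> code_star Y" using dec by simp
  then show ?case using star_cons.IH[OF star_cons.prems(1)] by blast
qed

lemma star_right_cancel:
  assumes "a \<in> code_star Y" and "bifix_code Y" and "b @ a \<in> code_star Y"
  shows "b \<in> code_star Y"
  using assms
proof (induction "length a" arbitrary: a b rule: less_induct)
  case less
  show ?case
  proof (cases "a = []")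
    case True
    then show ?thesis using less.prems(3) by simp
  next
    case False
    then obtain r y where a: "a = r @ y" "y \<in> Y" "r \<in> code_star Y"
      using star_last_factor[OF less.prems(1)] by blast
    obtain r' y' where ba: "b @ a = r' @ y'" "y' \<in> Y" "r' \<in> code_star Y"
      using star_last_factor[OF less.prems(3)] False by blast
    have "suffix y (b @ a)" "suffix y' (b @ a)"
      using a(1) ba(1) by (metis append.assoc suffix_def)+
    then have "suffix y y' \<or> suffix y' y" by (rule suffix_same_cases)
    then have "y = y'" using bifix_suffix_eq[OF less.prems(2)] a(2) ba(2) by metis
    then have "b @ r \<in> code_star Y" using a(1) ba by simp
    moreover have "length r < length a"
      using a bifix_code_nonempty[OF less.prems(2) a(2)] by simp
    ultimately show ?thesis using less.hyps a(3) less.prems(2) by blast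
  qed
qed

text \<open>A nonempty proper prefix of a code word is not in \<open>Y*\<close>: its first factor would be
  a code word that is a prefix of another one.\<close>

lemma strict_prefix_not_in_star:
  assumes bif: "bifix_code Y" and yY: "y \<in> Y" and p: "strict_prefix p y" "p \<noteq> []"
  shows "p \<notin> code_star Y"
proof
  assume "p \<in> code_star Y"
  then obtain y' r where dec: "p = y' @ r" "y' \<in> Y" using star_first_factor p(2) by blast
  then have "prefix y' p" by simp
  then have "prefix y' y" using p(1) by (meson prefix_order.less_imp_le prefix_order.trans)
  then have "y' = y" using bifix_prefix_eq[OF bif dec(2) yY] by blast
  then show False using p(1) dec(1) prefix_length_less by fastforce
qed

lemma left_greedy:
  assumes "bifix_code Y"
  shows "\<exists>a b. t = a @ b \<and> a \<in> code_star Y \<and> (\<forall>y\<in>Y. \<not> prefix y b)"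
proof (induction "length t" arbitrary: t rule: less_induct)
  case less
  show ?case
  proof (cases "\<exists>y\<in>Y. prefix y t")
    case True
    then obtain y t' where yt: "y \<in> Y" "t = y @ t'" by (auto simp: prefix_def)
    have "length t' < length t" using yt bifix_code_nonempty[OF assms yt(1)] by simp
    then obtain a b where ab: "t' = a @ b" "a \<in> code_star Y" "\<forall>y\<in>Y. \<not> prefix y b"
      using less.hyps by blast
    have "t = (y @ a) @ b" "y @ a \<in> code_star Y" using yt ab by (auto intro: star_cons)
    then show ?thesis using ab(3) by blast
  next
    case False
    then show ?thesis using star_nil[of Y] by (intro exI[of _ "[]"] exI[of _ t]) simp
  qed
qed

lemma right_greedy:
  assumes "bifix_code Y"
  shows "\<exists>u z. t = u @ z \<and> z \<in> code_star Y \<and> (\<forall>y\<in>Y. \<not> suffix y u)"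
proof (induction "length t" arbitrary: t rule: less_induct)
  case less
  show ?case
  proof (cases "\<exists>y\<in>Y. suffix y t")
    case True
    then obtain y t' where yt: "y \<in> Y" "t = t' @ y" by (auto simp: suffix_def)
    have "length t' < length t" using yt bifix_code_nonempty[OF assms yt(1)] by simp
    then obtain u z where uz: "t' = u @ z" "z \<in> code_star Y" "\<forall>y\<in>Y. \<not> suffix y u"
      using less.hyps by blast
    have "z @ y \<in> code_star Y" using star_append[OF uz(2) star_single[OF yt(1)]] .
    then show ?thesis using yt(2) uz(1,3) by (intro exI[of _ u] exI[of _ "z @ y"]) simp
  next
    case False
    then show ?thesis using star_nil[of Y] by (intro exI[of _ t] exI[of _ "[]"]) simp
  qed
qed

section \<open>Free cuts\<close>

text \<open>A cut \<open>k \<le> |w|\<close> of \<open>w\<close> is free if no occurrence of a word of \<open>Y\<close> in \<open>w\<close> ends at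
  position \<open>k\<close>, i.e. no word of \<open>Y\<close> is a suffix of the prefix of length \<open>k\<close>.\<close>

definition free_cuts :: "'a list set \<Rightarrow> 'a list \<Rightarrow> nat set" where
  "free_cuts Y w = {k. k \<le> length w \<and> (\<forall>y\<in>Y. \<not> suffix y (take k w))}"

lemma free_cuts_finite: "finite (free_cuts Y w)"
  by (rule finite_subset[of _ "{..length w}"]) (auto simp: free_cuts_def)

lemma free_cuts_zero: "bifix_code Y \<Longrightarrow> 0 \<in> free_cuts Y w"
  unfolding free_cuts_def bifix_code_def by auto

text \<open>The segment of \<open>w\<close> between a cut and a later free cut is never in \<open>Y*\<close>: its last
  code word would end at the free cut.\<close>

lemma segment_before_free_cut:
  assumes "k1 < k2" and "k2 \<in> free_cuts Y w"
  shows "drop k1 (take k2 w) \<notin> code_star Y"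
proof
  assume star: "drop k1 (take k2 w) \<in> code_star Y"
  have "drop k1 (take k2 w) \<noteq> []" using assms unfolding free_cuts_def by simp
  then obtain y where "y \<in> Y" "suffix y (drop k1 (take k2 w))"
    using star_nonempty_suffix[OF star] by blast
  then have "y \<in> Y" "suffix y (take k2 w)" using suffix_drop suffix_order.trans by blast+
  then show False using assms(2) unfolding free_cuts_def by blast
qed

lemma drop_take_split:
  assumes "i \<le> j" and "j \<le> k" and "k \<le> length w"
  shows "drop i (take k w) = drop i (take j w) @ drop j (take k w)"
proof -
  have "take k w = take j w @ drop j (take k w)"
    using assms(2) by (metis append_take_drop_id min.absorb1 take_take)
  moreover have "i \<le> length (take j w)" using assms by simp
  ultimately show ?thesis by (metis append_take_drop_id drop_append diff_is_0_eq drop_0)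
qed

lemma greedy_remainder:
  assumes c: "c \<in> free_cuts Y w" and k: "k < c"
    and dec: "drop k (take c w) = a @ b" and a: "a \<in> code_star Y" and b: "\<forall>y\<in>Y. \<not> prefix y b"
    and cover: "\<forall>u. sublist u w \<longrightarrow> m < length u \<longrightarrow> (\<exists>y\<in>Y. prefix y u \<or> suffix y u)"
  shows "b \<noteq> []" and "length b \<le> m"
proof -
  show "b \<noteq> []" using segment_before_free_cut[OF k c] dec a by auto
  have suf: "suffix b (take c w)"
    using dec suffix_drop[of k "take c w"] by (metis suffix_appendI suffix_order.refl suffix_order.trans)
  then have "sublist b w" by (meson sublist_order.order.trans sublist_take suffix_imp_sublist)
  moreover have "\<forall>y\<in>Y. \<not> suffix y b"
    using c suf suffix_order.trans unfolding free_cuts_def by blast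
  ultimately show "length b \<le> m" using cover b by fastforce
qed

text \<open>The free cuts below a free cut \<open>c\<close> are told apart by the lengths of their greedy
  remainders, which lie in \<open>{1..m}\<close>: two cuts with the same remainder would leave a
  segment in \<open>Y*\<close> before the later one, by left unitarity.\<close>

lemma free_cuts_below_card:
  assumes bif: "bifix_code Y" and c: "c \<in> free_cuts Y w"
    and cover: "\<forall>u. sublist u w \<longrightarrow> m < length u \<longrightarrow> (\<exists>y\<in>Y. prefix y u \<or> suffix y u)"
  shows "card {k \<in> free_cuts Y w. k < c} \<le> m"
proof -
  define K where "K = {k \<in> free_cuts Y w. k < c}"
  have "\<forall>k. \<exists>a b. drop k (take c w) = a @ b \<and> a \<in> code_star Y \<and> (\<forall>y\<in>Y. \<not> prefix y b)"
    using left_greedy[OF bif] by blast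
  then obtain A B where AB: "\<And>k. drop k (take c w) = A k @ B k \<and> A k \<in> code_star Y \<and> (\<forall>y\<in>Y. \<not> prefix y (B k))"
    by metis
  have suf: "suffix (B k) (take c w)" for k
    using AB[of k] suffix_drop[of k "take c w"] by (metis suffix_appendI suffix_order.refl suffix_order.trans)
  have range: "length (B k) \<in> {1..m}" if "k \<in> K" for k
    using greedy_remainder[OF c _ _ _ _ cover, of k "A k" "B k"] AB[of k] that
    unfolding K_def by (simp add: Suc_leI)
  have distinct: "length (B k1) \<noteq> length (B k2)" if "k1 \<in> K" "k2 \<in> K" "k1 < k2" for k1 k2
  proof
    assume "length (B k1) = length (B k2)"
    then have "suffix (B k1) (B k2)" "suffix (B k2) (B k1)"
      using suffix_length_suffix[OF suf suf] by simp_all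
    then have same: "B k1 = B k2" by (rule suffix_order.antisym)
    have "drop k1 (take c w) = drop k1 (take k2 w) @ drop k2 (take c w)"
      using that c unfolding K_def free_cuts_def by (intro drop_take_split) auto
    then have "A k1 = drop k1 (take k2 w) @ A k2" using AB[of k1] AB[of k2] same by simp
    then have "drop k1 (take k2 w) \<in> code_star Y"
      using star_right_cancel AB bif by metis
    then show False using segment_before_free_cut that unfolding K_def by blast
  qed
  have "inj_on (\<lambda>k. length (B k)) K"
    by (rule inj_onI) (metis distinct linorder_neqE_nat)
  then have "card K \<le> card {1..m}" using range by (intro card_inj_on_le) auto
  then show ?thesis unfolding K_def by simp
qed

text \<open>Hence a word whose long factors are all blocked by \<open>Y\<close> has at most \<open>m + 1\<close> free
  cuts: the largest one and at most \<open>m\<close> below it.\<close>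

lemma free_cuts_card_bound:
  assumes bif: "bifix_code Y"
    and cover: "\<forall>u. sublist u w \<longrightarrow> m < length u \<longrightarrow> (\<exists>y\<in>Y. prefix y u \<or> suffix y u)"
  shows "card (free_cuts Y w) \<le> Suc m"
proof -
  define c where "c = Max (free_cuts Y w)"
  have c: "c \<in> free_cuts Y w"
    unfolding c_def using free_cuts_finite free_cuts_zero[OF bif] by (intro Max_in) auto
  have "k \<le> c" if "k \<in> free_cuts Y w" for k
    using that Max_ge[OF free_cuts_finite] unfolding c_def by blast
  then have "free_cuts Y w \<subseteq> insert c {k \<in> free_cuts Y w. k < c}"
    by fastforce
  then have "card (free_cuts Y w) \<le> card (insert c {k \<in> free_cuts Y w. k < c})"
    using free_cuts_finite by (intro card_mono) auto
  also have "\<dots> \<le> Suc (card {k \<in> free_cuts Y w. k < c})"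
    using free_cuts_finite by (simp add: card_insert_if)
  also have "\<dots> \<le> Suc m" using free_cuts_below_card[OF bif c cover] by simp
  finally show ?thesis .
qed

lemma greedy_prefix_cut:
  assumes bif: "bifix_code Y" and yY: "y \<in> Y" and p: "strict_prefix p y" "p \<noteq> []"
    and dec: "p = u @ z" and z: "z \<in> code_star Y" and u: "\<forall>y'\<in>Y. \<not> suffix y' u"
  shows "length u \<in> free_cuts Y y - {0}"
proof -
  have "prefix u p" using dec by simp
  then have "prefix u y" using p(1) by (meson prefix_order.less_imp_le prefix_order.trans)
  then have "take (length u) y = u" "length u \<le> length y"
    by (auto simp: prefix_def)
  moreover have "u \<noteq> []" using strict_prefix_not_in_star[OF bif yY p] dec z by auto
  ultimately show ?thesis using u unfolding free_cuts_def by simp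
qed

text \<open>Two free cuts \<open>k1 < k2\<close> of \<open>w\<close> never yield the same greedy remainder \<open>u\<close> when the
  prefixes \<open>p\<cdot>w[..k1]\<close> and \<open>p\<cdot>w[..k2]\<close> are factorised from the right: the segment from
  \<open>k1\<close> to \<open>k2\<close> would lie in \<open>Y*\<close>, by right unitarity.\<close>

lemma greedy_prefixes_distinct:
  assumes bif: "bifix_code Y" and k: "k1 < k2" "k2 \<in> free_cuts Y w"
    and dec1: "p @ take k1 w = u @ z1" and z1: "z1 \<in> code_star Y"
    and dec2: "p @ take k2 w = u @ z2" and z2: "z2 \<in> code_star Y"
  shows False
proof -
  define g where "g = drop k1 (take k2 w)"
  have "take k2 w = take k1 w @ g"
    unfolding g_def using k(1) by (metis append_take_drop_id less_imp_le_nat min.absorb1 take_take)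
  then have "u @ z2 = (p @ take k1 w) @ g" using dec2 by simp
  also have "\<dots> = u @ (z1 @ g)" unfolding dec1 by simp
  finally have "z1 @ g \<in> code_star Y" using z2 by simp
  then have "g \<in> code_star Y" by (rule star_left_cancel[OF z1 bif])
  then show False using segment_before_free_cut[OF k] unfolding g_def by blast
qed

text \<open>If \<open>y = pre\<cdot>w\<cdot>post \<in> Y\<close> with \<open>pre, post\<close> nonempty, mapping a free cut \<open>k\<close> of \<open>w\<close> to
  the cut \<open>|u|\<close> of \<open>y\<close> obtained from the greedy factorisation of the prefix of length
  \<open>|pre| + k\<close> is injective and avoids the free cut \<open>0\<close> of \<open>y\<close>.\<close>

lemma free_cuts_grow:
  assumes bif: "bifix_code Y" and yY: "y \<in> Y" and y: "y = pre @ w @ post"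
    and pre: "pre \<noteq> []" and post: "post \<noteq> []"
  shows "card (free_cuts Y w) < card (free_cuts Y y)"
proof -
  define a where "a = length pre"
  have "\<forall>k. \<exists>u z. take (a + k) y = u @ z \<and> z \<in> code_star Y \<and> (\<forall>y'\<in>Y. \<not> suffix y' u)"
    using right_greedy[OF bif] by blast
  then obtain U Z where UZ: "\<And>k. take (a + k) y = U k @ Z k \<and> Z k \<in> code_star Y \<and> (\<forall>y'\<in>Y. \<not> suffix y' (U k))"
    by metis
  have take_y: "take (a + k) y = pre @ take k w" if "k \<in> free_cuts Y w" for k
    using that unfolding y a_def free_cuts_def by simp
  have into: "length (U k) \<in> free_cuts Y y - {0}" if "k \<in> free_cuts Y w" for k
  proof (rule greedy_prefix_cut[OF bif yY])
    have "k \<le> length w" using that unfolding free_cuts_def by simp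
    then have "length (take (a + k) y) < length y" using post unfolding y a_def by (cases post) auto
    then show "strict_prefix (take (a + k) y) y"
      using take_is_prefix[of "a + k" y] by (auto simp: strict_prefix_def)
    show "take (a + k) y \<noteq> []" using pre take_y[OF that] by simp
  qed (use UZ in auto)
  have distinct: "length (U k1) \<noteq> length (U k2)"
    if k: "k1 \<in> free_cuts Y w" "k2 \<in> free_cuts Y w" "k1 < k2" for k1 k2
  proof
    assume "length (U k1) = length (U k2)"
    moreover have pre_y: "prefix (U k) y" for k
    proof -
      have "prefix (U k) (take (a + k) y)" using UZ[of k] by simp
      then show ?thesis using take_is_prefix prefix_order.trans by blast
    qed
    ultimately have "prefix (U k1) (U k2)" "prefix (U k2) (U k1)"
      using prefix_length_prefix[OF pre_y pre_y] by simp_all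
    then have "U k1 = U k2" by (rule prefix_order.antisym)
    then show False
      using greedy_prefixes_distinct[OF bif k(3,2)] UZ take_y[OF k(1)] take_y[OF k(2)] by metis
  qed
  have "inj_on (\<lambda>k. length (U k)) (free_cuts Y w)"
    by (rule inj_onI) (metis distinct linorder_neqE_nat)
  then have "card (free_cuts Y w) \<le> card (free_cuts Y y - {0})"
    using into free_cuts_finite by (intro card_inj_on_le) auto
  also have "\<dots> < card (free_cuts Y y)"
    by (rule card_Diff1_less[OF free_cuts_finite free_cuts_zero[OF bif]])
  finally show ?thesis .
qed

section \<open>Uniform recurrence and finiteness\<close>

lemma bounded_length_finite:
  assumes "finite A" and "X \<subseteq> lists A" and "\<forall>x\<in>X. length x \<le> n"
  shows "finite X"
proof -
  have "X \<subseteq> {xs. set xs \<subseteq> A \<and> length xs \<le> n}" using assms(2,3) by auto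
  then show ?thesis using finite_lists_length_le[OF assms(1)] finite_subset by blast
qed

text \<open>If every word of length \<open>n\<close> of a factorial set \<open>F\<close> contains \<open>w\<close>, then every word of
  \<open>F\<close> of length at least \<open>n + 2\<close> contains \<open>w\<close> strictly inside: look at the factor of
  length \<open>n\<close> starting at the second letter.\<close>

lemma interior_occurrence:
  assumes fac: "factorial_set F" and yF: "y \<in> F" and len: "Suc (Suc n) \<le> length y"
    and rec: "\<forall>v\<in>F. length v = n \<longrightarrow> sublist w v"
  shows "\<exists>pre post. y = pre @ w @ post \<and> pre \<noteq> [] \<and> post \<noteq> []"
proof -
  define v where "v = take n (drop 1 y)"
  have "sublist v y" unfolding v_def by (meson sublist_drop sublist_order.order.trans sublist_take)
  then have "v \<in> F" using fac yF unfolding factorial_set_def by blast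
  moreover have "length v = n" unfolding v_def using len by simp
  ultimately obtain p s where v: "v = p @ w @ s" using rec unfolding sublist_def by blast
  have "y = take 1 y @ drop 1 y" by simp
  also have "drop 1 y = v @ drop n (drop 1 y)" unfolding v_def by (rule append_take_drop_id[symmetric])
  finally have "y = (take 1 y @ p) @ w @ (s @ drop n (drop 1 y))" using v by simp
  moreover have "take 1 y @ p \<noteq> []" "s @ drop n (drop 1 y) \<noteq> []" using len by (cases y; simp)+
  ultimately show ?thesis by blast
qed

text \<open>An F-thin set is finite: its words avoid some \<open>w \<in> F\<close>, hence are shorter than the
  recurrence length of \<open>w\<close>.\<close>

lemma thin_set_finite:
  assumes finA: "finite A" and ur: "uniformly_recurrent A F" and thin: "F_thin F X"
  shows "finite X"
proof -
  have FA: "F \<subseteq> lists A" and fac: "factorial_set F"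
    using ur unfolding uniformly_recurrent_def by blast+
  obtain w where w: "w \<in> F" "\<forall>x\<in>X. \<not> sublist w x" and XF: "X \<subseteq> F"
    using thin unfolding F_thin_def by blast
  obtain n where n: "\<forall>v\<in>F. length v = n \<longrightarrow> sublist w v"
    using ur w(1) unfolding uniformly_recurrent_def by blast
  have "length x \<le> n" if x: "x \<in> X" for x
  proof (rule ccontr)
    assume "\<not> length x \<le> n"
    moreover have "take n x \<in> F"
      using fac XF x sublist_take unfolding factorial_set_def by blast
    ultimately have "sublist w (take n x)" using n by simp
    then have "sublist w x" using sublist_order.order.trans[OF _ sublist_take] by blast
    then show False using w(2) x by blast
  qed
  then show ?thesis using XF FA by (intro bounded_length_finite[OF finA]) auto
qed

text \<open>A bifix code in a uniformly recurrent set whose words have a bounded number of free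
  cuts is finite: no code word can strictly contain a word of \<open>F\<close> with the maximal number
  of free cuts, so code words are shorter than its recurrence length plus two.\<close>

lemma bounded_free_cuts_code_finite:
  assumes finA: "finite A" and ur: "uniformly_recurrent A F"
    and bif: "bifix_code Y" and YF: "Y \<subseteq> F" and bound: "\<forall>w\<in>F. card (free_cuts Y w) \<le> B"
  shows "finite Y"
proof -
  have FA: "F \<subseteq> lists A" and fac: "factorial_set F" and "F \<noteq> {}"
    using ur unfolding uniformly_recurrent_def by blast+
  then obtain w where "w \<in> F" by blast
  moreover have "\<forall>v. v \<in> F \<longrightarrow> card (free_cuts Y v) < Suc B"
    using bound by (simp add: le_imp_less_Suc)
  ultimately obtain w0 where w0: "w0 \<in> F" "\<forall>w\<in>F. card (free_cuts Y w) \<le> card (free_cuts Y w0)"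
    using ex_has_greatest_nat[of "\<lambda>v. v \<in> F" w "\<lambda>v. card (free_cuts Y v)" "Suc B"] by blast
  obtain n where n: "\<forall>v\<in>F. length v = n \<longrightarrow> sublist w0 v"
    using ur w0(1) unfolding uniformly_recurrent_def by blast
  have "length y \<le> Suc n" if yY: "y \<in> Y" for y
  proof (rule ccontr)
    assume "\<not> length y \<le> Suc n"
    then have "Suc (Suc n) \<le> length y" by simp
    moreover have yF: "y \<in> F" using YF yY by blast
    ultimately obtain pre post where "y = pre @ w0 @ post" "pre \<noteq> []" "post \<noteq> []"
      using interior_occurrence[OF fac _ _ n] by blast
    then have "card (free_cuts Y w0) < card (free_cuts Y y)" by (rule free_cuts_grow[OF bif yY])
    then show False using w0(2) yF leD by blast
  qed
  then show ?thesis using YF FA by (intro bounded_length_finite[OF finA]) auto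
qed

section \<open>Greedy completion of a bifix code\<close>

definition incomparable :: "'a list \<Rightarrow> 'a list \<Rightarrow> bool" where
  "incomparable u v \<longleftrightarrow>
     \<not> strict_prefix u v \<and> \<not> strict_prefix v u \<and> \<not> strict_suffix u v \<and> \<not> strict_suffix v u"

lemma incomparable_sym: "incomparable u v = incomparable v u"
  unfolding incomparable_def by blast

lemma bifix_code_incomparable: "bifix_code Y \<Longrightarrow> u \<in> Y \<Longrightarrow> v \<in> Y \<Longrightarrow> incomparable u v"
  unfolding bifix_code_def incomparable_def by blast

primrec completion_upto :: "'a list set \<Rightarrow> 'a list set \<Rightarrow> nat \<Rightarrow> 'a list set" where
  "completion_upto F X 0 = {}"
| "completion_upto F X (Suc n) = completion_upto F X n \<union>
     {w \<in> F. length w = Suc n \<and> (\<forall>y \<in> X \<union> completion_upto F X n. incomparable w y)}"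

definition bifix_completion :: "'a list set \<Rightarrow> 'a list set \<Rightarrow> 'a list set" where
  "bifix_completion F X = (\<Union>n. completion_upto F X n)"

lemma completion_upto_length: "w \<in> completion_upto F X n \<Longrightarrow> 1 \<le> length w \<and> length w \<le> n"
  by (induction n) auto

lemma completion_upto_subset: "completion_upto F X n \<subseteq> F"
  by (induction n) auto

lemma completion_upto_mono: "k \<le> n \<Longrightarrow> completion_upto F X k \<subseteq> completion_upto F X n"
  by (induction n) (auto simp: le_Suc_eq)

lemma completion_upto_Suc_iff:
  "length w = Suc k \<Longrightarrow> w \<in> completion_upto F X (Suc k) \<longleftrightarrow>
     w \<in> F \<and> (\<forall>y\<in>X \<union> completion_upto F X k. incomparable w y)"
  using completion_upto_length[of w F X k] by auto

lemma completion_upto_at: "w \<in> completion_upto F X n \<Longrightarrow> w \<in> completion_upto F X (length w)"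
  by (induction n) auto

lemma bifix_completion_iff:
  "w \<in> bifix_completion F X \<longleftrightarrow> w \<in> completion_upto F X (length w)"
  unfolding bifix_completion_def using completion_upto_at by blast

lemma completion_shorter_incomparable:
  assumes u: "u \<in> bifix_completion F X" and v: "v \<in> bifix_completion F X"
    and lt: "length u < length v"
  shows "incomparable v u"
proof -
  obtain k where k: "length v = Suc k" using lt by (cases "length v") auto
  have "u \<in> completion_upto F X k"
    using u lt k completion_upto_mono[of "length u" k] unfolding bifix_completion_iff by auto
  then show ?thesis
    using v k completion_upto_Suc_iff[OF k] unfolding bifix_completion_iff by auto
qed

lemma bifix_completion_bifix: "bifix_code (bifix_completion F X)"
proof -
  have "[] \<notin> bifix_completion F X"
    unfolding bifix_completion_def using completion_upto_length by fastforce
  moreover have "\<not> strict_prefix u v \<and> \<not> strict_suffix u v"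
    if uv: "u \<in> bifix_completion F X" "v \<in> bifix_completion F X" for u v
  proof (cases "length u < length v")
    case True
    then show ?thesis using completion_shorter_incomparable[OF uv True] unfolding incomparable_def by blast
  next
    case False
    then show ?thesis using prefix_length_less suffix_length_less by fastforce
  qed
  ultimately show ?thesis unfolding bifix_code_def by blast
qed

lemma bifix_completion_subset: "bifix_completion F X \<subseteq> F"
  unfolding bifix_completion_def using completion_upto_subset by blast

lemma completion_blocks:
  assumes uF: "u \<in> F" and u: "u \<noteq> []" "u \<notin> bifix_completion F X"
  shows "\<exists>y. (y \<in> X \<or> y \<in> bifix_completion F X \<and> length y < length u) \<and> \<not> incomparable u y"
proof -
  obtain k where k: "length u = Suc k" using u(1) by (cases u) auto
  then obtain y where y: "y \<in> X \<union> completion_upto F X k" "\<not> incomparable u y"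
    using u(2) uF completion_upto_Suc_iff[OF k] unfolding bifix_completion_iff by auto
  have "y \<in> completion_upto F X k \<Longrightarrow> y \<in> bifix_completion F X \<and> length y < length u"
    using k completion_upto_length unfolding bifix_completion_def by fastforce
  then show ?thesis using y by blast
qed

lemma completion_incomparable_base:
  assumes y: "y \<in> bifix_completion F X" and x: "x \<in> X"
  shows "incomparable y x"
proof -
  have "1 \<le> length y" using y completion_upto_length unfolding bifix_completion_def by blast
  then obtain j where j: "length y = Suc j" by (cases "length y") auto
  then show ?thesis using y x completion_upto_Suc_iff[OF j] unfolding bifix_completion_iff by simp
qed

text \<open>A bifix code contained in \<open>F\<close> lies in its completion: each of its words is
  incomparable with \<open>X\<close> and with all words of the completion.\<close>

lemma bifix_completion_superset:
  assumes bifX: "bifix_code X" and XF: "X \<subseteq> F"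
  shows "X \<subseteq> bifix_completion F X"
proof
  fix x assume x: "x \<in> X"
  show "x \<in> bifix_completion F X"
  proof (rule ccontr)
    assume "x \<notin> bifix_completion F X"
    then obtain y where "y \<in> X \<or> y \<in> bifix_completion F X \<and> length y < length x"
      "\<not> incomparable x y"
      using completion_blocks XF x bifix_code_nonempty[OF bifX x] by blast
    then show False
      using bifix_code_incomparable[OF bifX x] completion_incomparable_base[OF _ x]
        incomparable_sym by blast
  qed
qed

lemma bifix_completion_maximal:
  assumes bifX: "bifix_code X" and XF: "X \<subseteq> F"
  shows "F_maximal_bifix F (bifix_completion F X)"
  unfolding F_maximal_bifix_def
proof (intro conjI allI impI bifix_completion_bifix bifix_completion_subset)
  fix Z assume Z: "bifix_code Z \<and> Z \<subseteq> F \<and> bifix_completion F X \<subseteq> Z"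
  have "z \<in> bifix_completion F X" if z: "z \<in> Z" for z
  proof (rule ccontr)
    assume "z \<notin> bifix_completion F X"
    moreover have "z \<in> F" "z \<noteq> []" using z Z bifix_code_nonempty by blast+
    ultimately obtain y where "y \<in> bifix_completion F X" "\<not> incomparable z y"
      using completion_blocks[of z F X] bifix_completion_superset[OF bifX XF] by blast
    then show False using bifix_code_incomparable z Z by blast
  qed
  then show "Z = bifix_completion F X" using Z by blast
qed

lemma bifix_completion_covers:
  assumes bifX: "bifix_code X" and XF: "X \<subseteq> F" and m: "\<forall>x\<in>X. length x \<le> m"
    and uF: "u \<in> F" and long: "m < length u"
  shows "\<exists>y\<in>bifix_completion F X. prefix y u \<or> suffix y u"
proof (cases "u \<in> bifix_completion F X")
  case True
  then show ?thesis by blast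
next
  case False
  have "u \<noteq> []" using long by auto
  then obtain y where y: "y \<in> X \<or> y \<in> bifix_completion F X \<and> length y < length u"
    "\<not> incomparable u y"
    using completion_blocks[OF uF _ False] by blast
  have yY: "y \<in> bifix_completion F X" using y(1) bifix_completion_superset[OF bifX XF] by blast
  have shorter: "length y < length u" using y(1) m long by (cases "y \<in> X") auto
  then have "\<not> strict_prefix u y" "\<not> strict_suffix u y"
    by (auto dest: prefix_length_less suffix_length_less)
  then have "strict_prefix y u \<or> strict_suffix y u" using y(2) unfolding incomparable_def by blast
  then show ?thesis using yY by (auto simp: strict_prefix_def strict_suffix_def)
qed

text \<open>The completion of a finite bifix code of a uniformly recurrent set is finite: its
  covering property bounds the number of free cuts of the words of \<open>F\<close>.\<close>

lemma finite_bifix_completion: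
  assumes finA: "finite A" and ur: "uniformly_recurrent A F"
    and bifX: "bifix_code X" and XF: "X \<subseteq> F" and finX: "finite X"
  shows "finite (bifix_completion F X)"
proof -
  obtain m where m: "\<forall>x\<in>X. length x \<le> m"
    using finite_nat_set_iff_bounded_le finX by (metis finite_imageI imageI)
  have "card (free_cuts (bifix_completion F X) w) \<le> Suc m" if w: "w \<in> F" for w
  proof (rule free_cuts_card_bound[OF bifix_completion_bifix], intro allI impI)
    fix u assume "sublist u w" "m < length u"
    moreover have "u \<in> F" using ur w \<open>sublist u w\<close>
      unfolding uniformly_recurrent_def factorial_set_def by blast
    ultimately show "\<exists>y\<in>bifix_completion F X. prefix y u \<or> suffix y u"
      using bifix_completion_covers[OF bifX XF m] by blast
  qed
  then show ?thesis
    using bounded_free_cuts_code_finite[OF finA ur bifix_completion_bifix bifix_completion_subset]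
    by blast
qed

theorem mainTheorem10:
  fixes A :: "'a set" and F :: "'a list set"
  assumes "finite A" and "uniformly_recurrent A F"
  shows "(\<forall>X. bifix_code X \<and> X \<subseteq> F \<and> F_thin F X \<longrightarrow> finite X) \<and>
         (\<forall>X. bifix_code X \<and> X \<subseteq> F \<and> finite X \<longrightarrow>
              (\<exists>Y. X \<subseteq> Y \<and> finite Y \<and> Y \<subseteq> F \<and> F_maximal_bifix F Y))"
proof (intro conjI allI impI)
  fix X assume "bifix_code X \<and> X \<subseteq> F \<and> F_thin F X"
  then show "finite X" using thin_set_finite[OF assms] by blast
next
  fix X assume "bifix_code X \<and> X \<subseteq> F \<and> finite X"
  then have bifX: "bifix_code X" and XF: "X \<subseteq> F" and finX: "finite X" by blast+
  show "\<exists>Y. X \<subseteq> Y \<and> finite Y \<and> Y \<subseteq> F \<and> F_maximal_bifix F Y"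
  proof (intro exI conjI)
    show "X \<subseteq> bifix_completion F X" by (rule bifix_completion_superset[OF bifX XF])
    show "finite (bifix_completion F X)" by (rule finite_bifix_completion[OF assms bifX XF finX])
    show "bifix_completion F X \<subseteq> F" by (rule bifix_completion_subset)
    show "F_maximal_bifix F (bifix_completion F X)" by (rule bifix_completion_maximal[OF bifX XF])
  qed
qed

end
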